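(* Assume the standing hypotheses described in the context. If $x,y\in\mathbb X$, $\|x-x_0\|\le t$, $\|y-x\|\le s$ and $s+t<R$ (with $s,t\ge 0$), then \[\|F'(x_0)^{-1}E_F(y,x)\|\le e_f(t+s,t),\] and, if $s\neq0$, \[\|F'(x_0)^{-1}E_F(y,x)\|\le\frac12\,\frac{f'(s+t)-f'(t)}{s}\,\|y-x\|^2.\]
   Context: Standing hypotheses: $\mathbb X,\mathbb Y$ are Banach spaces; $B(x,r)$ is the open ball. $R\in\mathbb R$, $C\subseteq\mathbb X$, $F:C\to\mathbb Y$ is continuous and continuously differentiable on $\mathrm{int}(C)$, $x_0\in\mathrm{int}(C)$ with $F'(x_0)$ non-singular, $f:[0,R)\to\mathbb R$ is continuously differentiable, $B(x_0,R)\subseteq C$, $\|F'(x_0)^{-1}[F'(y)-F'(x)]\|\le f'(\|y-x\|+\|x-x_0\|)-f'(\|x-x_0\|)$ for all $x,y\in B(x_0,R)$ with $\|x-x_0\|+\|y-x\|<R$, $\|F'(x_0)^{-1}F(x_0)\|\le f(0)$, and (h1) $f(0)>0$, $f'(0)=-1$; (h2) $f'$ is strictly increasing and convex; (h3) $f(t)<0$ for some $t\in(0,R)$. Linearization errors: $E_F(y,x):=F(y)-[F(x)+F'(x)(y-x)]$ for $x\in B(x_0,R)$, $y\in C$; $e_f(v,t):=f(v)-[f(t)+f'(t)(v-t)]$ for $t,v\in[0,R)$. *)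

theory Defs
  imports "HOL-Analysis.Analysis"
begin

definition E_F :: "('a::real_normed_vector \<Rightarrow> 'b::real_normed_vector) \<Rightarrow> ('a \<Rightarrow> ('a \<Rightarrow>\<^sub>L 'b)) \<Rightarrow> 'a \<Rightarrow> 'a \<Rightarrow> 'b" where
  "E_F F F' y x = F y - (F x + blinfun_apply (F' x) (y - x))"

definition e_f :: "(real \<Rightarrow> real) \<Rightarrow> (real \<Rightarrow> real) \<Rightarrow> real \<Rightarrow> real \<Rightarrow> real" where
  "e_f f f' v t = f v - (f t + f' t * (v - t))"

end

theory Submission
  imports Defs
begin

text \<open>
  Along the segment \<open>x + \<tau>(y - x)\<close> the linearization error is the integral of
  \<open>(F'(x + \<tau>(y - x)) - F' x)(y - x)\<close>, whose norm the majorant condition bounds by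
  \<open>(f'(b + \<tau>a) - f' b) a\<close> with \<open>a = \<parallel>y - x\<parallel>\<close>, \<open>b = \<parallel>x - x\<^sub>0\<parallel>\<close>.
  Since \<open>f'\<close> is convex, its increments grow when the base point moves right, so this
  is at most \<open>(f'(t + \<tau>s) - f' t) s\<close>, which integrates to \<open>e_f(t + s, t)\<close>;
  comparing instead with the secant slope of \<open>f'\<close> over \<open>[t, t + s]\<close> gives the
  quadratic bound.
\<close>

lemma convex_on_secant_slope_mono:
  fixes g :: "real \<Rightarrow> real"
  assumes g: "convex_on I g" and I: "p \<in> I" "q \<in> I" "p' \<in> I" "q' \<in> I"
    and le: "p < q" "p \<le> p'" "q \<le> q'" "p' < q'"
  shows "(g q - g p) / (q - p) \<le> (g q' - g p') / (q' - p')"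
proof -
  have "(g q - g p) / (q - p) \<le> (g q' - g p) / (q' - p)"
  proof (cases "q < q'")
    case True
    from convex_on_slope_le(1)[OF g I(1) I(4) le(1) True] show ?thesis
      by (smt (verit) minus_divide_divide)
  qed (use le in simp)
  also have "\<dots> \<le> (g q' - g p') / (q' - p')"
  proof (cases "p < p'")
    case True
    from convex_on_slope_le(2)[OF g I(1) I(4) True le(4)] show ?thesis
      by (smt (verit) minus_divide_divide)
  qed (use le in simp)
  finally show ?thesis .
qed

lemma convex_on_increment_le_slope:
  fixes g :: "real \<Rightarrow> real"
  assumes g: "convex_on I g" and I: "b \<in> I" "b + w \<in> I" "t \<in> I" "t + v \<in> I"
    and le: "b \<le> t" "0 \<le> w" "w \<le> v" "0 < v"
  shows "g (b + w) - g b \<le> w * ((g (t + v) - g t) / v)"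
proof (cases "w = 0")
  case False
  with le have "0 < w" by simp
  have "(g (b + w) - g b) / (b + w - b) \<le> (g (t + v) - g t) / (t + v - t)"
    by (rule convex_on_secant_slope_mono[OF g I]) (use le \<open>0 < w\<close> in auto)
  with \<open>0 < w\<close> show ?thesis
    by (simp add: divide_le_eq mult.commute)
qed simp

lemma mono_convex_on_increment_le:
  fixes g :: "real \<Rightarrow> real"
  assumes g: "convex_on I g" "mono_on I g" and I: "b \<in> I" "b + w \<in> I" "t \<in> I" "t + v \<in> I"
    and le: "b \<le> t" "0 \<le> w" "w \<le> v"
  shows "g (b + w) - g b \<le> g (t + v) - g t"
proof (cases "v = 0")
  case False
  with le have "0 < v" by simp
  have slope_nonneg: "0 \<le> (g (t + v) - g t) / v"
    using mono_onD[OF g(2) I(3) I(4)] \<open>0 < v\<close> by simp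
  have "g (b + w) - g b \<le> w * ((g (t + v) - g t) / v)"
    by (rule convex_on_increment_le_slope[OF g(1) I le \<open>0 < v\<close>])
  also have "\<dots> \<le> v * ((g (t + v) - g t) / v)"
    by (rule mult_right_mono[OF le(3) slope_nonneg])
  finally show ?thesis
    using \<open>0 < v\<close> by simp
qed (use le in simp)

lemma segment_point_in_closed_segment:
  fixes x y :: "'a::real_vector"
  assumes "0 \<le> \<tau>" "\<tau> \<le> 1"
  shows "x + \<tau> *\<^sub>R (y - x) \<in> closed_segment x y"
  unfolding in_segment using assms by (intro exI[of _ \<tau>]) (simp add: algebra_simps)

lemma linearization_error_le:
  fixes G :: "'a::real_normed_vector \<Rightarrow> 'b::real_normed_vector"
    and G' :: "'a \<Rightarrow> ('a \<Rightarrow>\<^sub>L 'b)"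
  assumes G_deriv: "\<And>z. z \<in> closed_segment x y \<Longrightarrow> (G has_derivative blinfun_apply (G' z)) (at z)"
    and \<phi>_cont: "continuous_on {0..1} \<phi>"
    and \<phi>_deriv: "\<And>\<tau>. \<tau> \<in> {0<..<1} \<Longrightarrow> (\<phi> has_real_derivative \<phi>' \<tau>) (at \<tau>)"
    and bound: "\<And>\<tau>. \<tau> \<in> {0<..<1} \<Longrightarrow> norm ((G' (x + \<tau> *\<^sub>R (y - x)) - G' x) (y - x)) \<le> \<phi>' \<tau>"
  shows "norm (E_F G G' y x) \<le> \<phi> 1 - \<phi> 0"
proof -
  define p where "p \<tau> = x + \<tau> *\<^sub>R (y - x)" for \<tau>
  define h where "h \<tau> = G (p \<tau>) - \<tau> *\<^sub>R G' x (y - x)" for \<tau>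
  have h_deriv: "(h has_vector_derivative (G' (p \<tau>) - G' x) (y - x)) (at \<tau>)"
    if "0 \<le> \<tau>" "\<tau> \<le> 1" for \<tau>
  proof -
    have "(p has_vector_derivative (y - x)) (at \<tau>)"
      unfolding p_def by (auto intro!: derivative_eq_intros)
    moreover have "(G has_derivative blinfun_apply (G' (p \<tau>))) (at (p \<tau>))"
      using G_deriv[OF segment_point_in_closed_segment[OF that, of x y]] by (simp add: p_def)
    ultimately have "((G \<circ> p) has_vector_derivative G' (p \<tau>) (y - x)) (at \<tau>)"
      by (simp add: vector_derivative_diff_chain_within has_derivative_at_withinI)
    then show ?thesis
      unfolding h_def by (auto intro!: derivative_eq_intros simp: o_def blinfun.diff_left)
  qed
  have "norm (h 1 - h 0) \<le> \<phi> 1 - \<phi> 0"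
  proof (rule differentiable_bound_general[OF zero_less_one _ \<phi>_cont])
    show "continuous_on {0..1} h"
      using h_deriv by (intro continuous_at_imp_continuous_on ballI)
        (auto intro: has_vector_derivative_continuous)
  qed (use h_deriv \<phi>_deriv bound in \<open>auto simp: p_def has_real_derivative_iff_has_vector_derivative\<close>)
  moreover have "h 1 - h 0 = E_F G G' y x"
    by (simp add: h_def p_def E_F_def algebra_simps)
  ultimately show ?thesis by simp
qed

lemma linearization_error_le_majorant_error:
  fixes G :: "'a::real_normed_vector \<Rightarrow> 'b::real_normed_vector"
    and G' :: "'a \<Rightarrow> ('a \<Rightarrow>\<^sub>L 'b)" and g g' :: "real \<Rightarrow> real"
  assumes G_deriv: "\<And>z. z \<in> closed_segment x y \<Longrightarrow> (G has_derivative blinfun_apply (G' z)) (at z)"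
    and G'_majorant: "\<And>\<tau>. \<tau> \<in> {0<..<1} \<Longrightarrow>
        norm (G' (x + \<tau> *\<^sub>R (y - x)) - G' x) \<le> g' (b + \<tau> * norm (y - x)) - g' b"
    and g_deriv: "\<And>u. u \<in> {0..<R} \<Longrightarrow> (g has_real_derivative g' u) (at u within {0..<R})"
    and g'_mono: "mono_on {0..<R} g'" and g'_convex: "convex_on {0..<R} g'"
    and le: "0 \<le> b" "b \<le> t" "0 \<le> s" "norm (y - x) \<le> s" "t + s < R"
  shows "norm (E_F G G' y x) \<le> e_f g g' (t + s) t"
proof (cases "s = 0")
  case True
  with le have "y = x" by simp
  with True show ?thesis by (simp add: E_F_def e_f_def)
next
  case False
  with le have "0 < s" by simp
  define a where "a = norm (y - x)"
  have a_le: "0 \<le> a" "a \<le> s"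
    using le by (simp_all add: a_def)
  have in_dom: "t + \<tau> * s \<in> {0..<R}" "b + \<tau> * a \<in> {0..<R}" if "0 \<le> \<tau>" "\<tau> \<le> 1" for \<tau>
    using that le a_le mult_left_le_one_le[of s \<tau>] mult_left_le_one_le[of a \<tau>] by auto
  have b_dom: "b \<in> {0..<R}" and t_dom: "t \<in> {0..<R}"
    using le by auto
  have g_cont: "continuous_on {0..<R} g"
    using g_deriv by (rule DERIV_continuous_on)
  have "norm (E_F G G' y x) \<le> (g (t + 1 * s) - 1 * s * g' t) - (g (t + 0 * s) - 0 * s * g' t)"
  proof (rule linearization_error_le[OF G_deriv])
    show "continuous_on {0..1} (\<lambda>\<tau>. g (t + \<tau> * s) - \<tau> * s * g' t)"
      by (intro continuous_intros continuous_on_compose2[OF g_cont]) (use in_dom in auto)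
  next
    fix \<tau> :: real assume \<tau>: "\<tau> \<in> {0<..<1}"
    have "t + \<tau> * s \<in> interior {0..<R}"
      using in_dom(1)[of \<tau>] \<tau> le \<open>0 < s\<close> by (auto simp: interior_atLeastLessThan intro: add_nonneg_pos)
    then have "(g has_real_derivative g' (t + \<tau> * s)) (at (t + \<tau> * s))"
      using g_deriv[OF interior_subset[THEN subsetD]] by (metis at_within_interior)
    moreover have "((\<lambda>\<tau>. t + \<tau> * s) has_real_derivative s) (at \<tau>)"
      by (auto intro!: derivative_eq_intros)
    ultimately have "((\<lambda>\<tau>. g (t + \<tau> * s)) has_real_derivative g' (t + \<tau> * s) * s) (at \<tau>)"
      by (rule DERIV_chain2)
    then show "((\<lambda>\<tau>. g (t + \<tau> * s) - \<tau> * s * g' t) has_real_derivative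
        s * (g' (t + \<tau> * s) - g' t)) (at \<tau>)"
      by (auto intro!: derivative_eq_intros simp: algebra_simps)
    have increment_le: "g' (b + \<tau> * a) - g' b \<le> g' (t + \<tau> * s) - g' t"
      by (rule mono_convex_on_increment_le[OF g'_convex g'_mono b_dom in_dom(2) t_dom in_dom(1)])
        (use \<tau> le a_le in \<open>simp_all add: mult_left_mono\<close>)
    have "g' t \<le> g' (t + \<tau> * s)"
      using mono_onD[OF g'_mono t_dom in_dom(1)] \<tau> \<open>0 < s\<close> by simp
    have "norm ((G' (x + \<tau> *\<^sub>R (y - x)) - G' x) (y - x)) \<le> norm (G' (x + \<tau> *\<^sub>R (y - x)) - G' x) * a"
      unfolding a_def by (rule norm_blinfun)
    also have "\<dots> \<le> (g' (b + \<tau> * a) - g' b) * a"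
      using G'_majorant[OF \<tau>] a_le by (simp add: a_def mult_right_mono)
    also have "\<dots> \<le> (g' (t + \<tau> * s) - g' t) * s"
      using increment_le a_le \<open>g' t \<le> g' (t + \<tau> * s)\<close>
      by (intro mult_mono) simp_all
    finally show "norm ((G' (x + \<tau> *\<^sub>R (y - x)) - G' x) (y - x)) \<le> s * (g' (t + \<tau> * s) - g' t)"
      by (simp add: mult.commute)
  qed
  then show ?thesis
    by (simp add: e_f_def algebra_simps)
qed

lemma linearization_error_le_quadratic:
  fixes G :: "'a::real_normed_vector \<Rightarrow> 'b::real_normed_vector"
    and G' :: "'a \<Rightarrow> ('a \<Rightarrow>\<^sub>L 'b)" and g' :: "real \<Rightarrow> real"
  assumes G_deriv: "\<And>z. z \<in> closed_segment x y \<Longrightarrow> (G has_derivative blinfun_apply (G' z)) (at z)"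
    and G'_majorant: "\<And>\<tau>. \<tau> \<in> {0<..<1} \<Longrightarrow>
        norm (G' (x + \<tau> *\<^sub>R (y - x)) - G' x) \<le> g' (b + \<tau> * norm (y - x)) - g' b"
    and g'_convex: "convex_on {0..<R} g'"
    and le: "0 \<le> b" "b \<le> t" "0 < s" "norm (y - x) \<le> s" "t + s < R"
  shows "norm (E_F G G' y x) \<le> 1 / 2 * ((g' (t + s) - g' t) / s) * (norm (y - x))\<^sup>2"
proof -
  define a where "a = norm (y - x)"
  define K where "K = (g' (t + s) - g' t) / s"
  have a_le: "0 \<le> a" "a \<le> s"
    using le by (simp_all add: a_def)
  have "norm (E_F G G' y x) \<le> K * a\<^sup>2 * 1\<^sup>2 / 2 - K * a\<^sup>2 * 0\<^sup>2 / 2"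
  proof (rule linearization_error_le[OF G_deriv])
    show "continuous_on {0..1} (\<lambda>\<tau>. K * a\<^sup>2 * \<tau>\<^sup>2 / 2)"
      by (intro continuous_intros) auto
  next
    fix \<tau> :: real assume \<tau>: "\<tau> \<in> {0<..<1}"
    show "((\<lambda>\<tau>. K * a\<^sup>2 * \<tau>\<^sup>2 / 2) has_real_derivative K * a\<^sup>2 * \<tau>) (at \<tau>)"
      by (auto intro!: derivative_eq_intros)
    have "\<tau> * a \<le> s"
      using \<tau> a_le mult_left_le_one_le[of a \<tau>] by simp
    then have increment_le: "g' (b + \<tau> * a) - g' b \<le> \<tau> * a * K"
      unfolding K_def using \<tau> le a_le
      by (intro convex_on_increment_le_slope[OF g'_convex]) auto
    have "norm ((G' (x + \<tau> *\<^sub>R (y - x)) - G' x) (y - x)) \<le> norm (G' (x + \<tau> *\<^sub>R (y - x)) - G' x) * a"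
      unfolding a_def by (rule norm_blinfun)
    also have "\<dots> \<le> (g' (b + \<tau> * a) - g' b) * a"
      using G'_majorant[OF \<tau>] a_le by (simp add: a_def mult_right_mono)
    also have "\<dots> \<le> (\<tau> * a * K) * a"
      using increment_le a_le(1) by (rule mult_right_mono)
    finally show "norm ((G' (x + \<tau> *\<^sub>R (y - x)) - G' x) (y - x)) \<le> K * a\<^sup>2 * \<tau>"
      by (simp add: power2_eq_square mult_ac)
  qed
  then show ?thesis
    by (simp add: K_def a_def)
qed

theorem corollary3p4:
  fixes F :: "'a::banach \<Rightarrow> 'b::banach"
    and F' :: "'a \<Rightarrow> ('a \<Rightarrow>\<^sub>L 'b)"
    and Finv :: "'b \<Rightarrow>\<^sub>L 'a"
    and C :: "'a set" and x0 :: 'a and R :: real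
    and f f' :: "real \<Rightarrow> real"
    and x y :: 'a and s t :: real
  assumes F_cont: "continuous_on C F"
    and F_deriv: "\<And>z. z \<in> interior C \<Longrightarrow> (F has_derivative blinfun_apply (F' z)) (at z)"
    and F'_cont: "continuous_on (interior C) F'"
    and x0_int: "x0 \<in> interior C"
    and Finv_left: "Finv o\<^sub>L F' x0 = id_blinfun"
    and Finv_right: "F' x0 o\<^sub>L Finv = id_blinfun"
    and f_deriv: "\<And>u. u \<in> {0..<R} \<Longrightarrow> (f has_real_derivative f' u) (at u within {0..<R})"
    and f'_cont: "continuous_on {0..<R} f'"
    and ball_C: "ball x0 R \<subseteq> C"
    and majorant: "\<And>u v. u \<in> ball x0 R \<Longrightarrow> v \<in> ball x0 R \<Longrightarrow> norm (u - x0) + norm (v - u) < R \<Longrightarrow>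
        norm (Finv o\<^sub>L (F' v - F' u)) \<le> f' (norm (v - u) + norm (u - x0)) - f' (norm (u - x0))"
    and init: "norm (Finv (F x0)) \<le> f 0"
    and h1a: "f 0 > 0" and h1b: "f' 0 = -1"
    and h2a: "strict_mono_on {0..<R} f'" and h2b: "convex_on {0..<R} f'"
    and h3: "\<exists>u\<in>{0<..<R}. f u < 0"
    and t_nn: "0 \<le> t" and s_nn: "0 \<le> s"
    and hx: "norm (x - x0) \<le> t" and hy: "norm (y - x) \<le> s" and hst: "s + t < R"
  shows "norm (Finv (E_F F F' y x)) \<le> e_f f f' (t + s) t
     \<and> (s \<noteq> 0 \<longrightarrow> norm (Finv (E_F F F' y x)) \<le> (1/2) * ((f' (s + t) - f' t) / s) * (norm (y - x))\<^sup>2)"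
proof -
  let ?G = "\<lambda>z. Finv (F z)" and ?G' = "\<lambda>z. Finv o\<^sub>L F' z"
  have E_F_eq: "Finv (E_F F F' y x) = E_F ?G ?G' y x"
    by (simp add: E_F_def blinfun.diff_right blinfun.add_right)
  have x_ball: "x \<in> ball x0 R" and y_ball: "y \<in> ball x0 R"
    using hx hy hst norm_triangle_ineq[of "x - x0" "y - x"] s_nn
    by (auto simp: dist_norm norm_minus_commute)
  then have segment_ball: "closed_segment x y \<subseteq> ball x0 R"
    by (simp add: closed_segment_subset)
  have G_deriv: "(?G has_derivative blinfun_apply (?G' z)) (at z)" if "z \<in> closed_segment x y" for z
  proof -
    have "z \<in> interior C"
      using that segment_ball ball_C interior_maximal by blast
    from bounded_linear.has_derivative[OF blinfun.bounded_linear_right[of Finv] F_deriv[OF this]]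
    show ?thesis by (simp add: blinfun_compose.rep_eq o_def)
  qed
  have G'_majorant: "norm (?G' (x + \<tau> *\<^sub>R (y - x)) - ?G' x)
      \<le> f' (norm (x - x0) + \<tau> * norm (y - x)) - f' (norm (x - x0))" if "\<tau> \<in> {0<..<1}" for \<tau>
  proof -
    have p_ball: "x + \<tau> *\<^sub>R (y - x) \<in> ball x0 R"
      using segment_point_in_closed_segment[of \<tau> x y] that segment_ball by auto
    have p_dist: "norm (x + \<tau> *\<^sub>R (y - x) - x) = \<tau> * norm (y - x)"
      using that by simp
    have "norm (x - x0) + \<tau> * norm (y - x) < R"
      using that hx hy hst mult_left_le_one_le[of "norm (y - x)" \<tau>] by auto
    then show ?thesis
      using majorant[OF x_ball p_ball] unfolding p_dist
      by (simp add: bounded_bilinear.diff_right[OF bounded_bilinear_blinfun_compose] add.commute)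
  qed
  show ?thesis
    unfolding E_F_eq
    using linearization_error_le_majorant_error[OF G_deriv G'_majorant f_deriv
        strict_mono_on_imp_mono_on[OF h2a] h2b _ hx s_nn hy]
      linearization_error_le_quadratic[OF G_deriv G'_majorant h2b _ hx _ hy]
      hst s_nn by (simp add: add.commute)
qed

end
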